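(* Let $m,n$ be positive integers with $m$ even ($n$ arbitrary). A matrix $A\in\Gamma^\pi_{m,n}$ is an extreme point of $\Gamma^\pi_{m,n}$ if and only if $A$ is a centrosymmetric rectangular permutation matrix.
   Context: A real $m\times n$ matrix is stochastic if its entries are nonnegative and each row sums to $1$. For $A=(a_{i,j})\in M_{m,n}$, $A^\pi$ is the matrix with $(A^\pi)_{i,j}=a_{m+1-i,n+1-j}$; $A$ is centrosymmetric if $A=A^\pi$. $\Gamma^\pi_{m,n}$ is the convex set of $m\times n$ centrosymmetric stochastic matrices. A rectangular permutation matrix is an $m\times n$ $(0,1)$-matrix with exactly one $1$ in each row. *)

theory Defs
  imports "HOL-Analysis.Analysis"
begin

text \<open>An m x n real matrix is represented as a function nat => nat => real with
  0-based indices; entries outside {0..<m} x {0..<n} are required to be zero,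
  so that the set of such matrices is a faithful copy of M_{m,n}(R).\<close>

definition is_mat :: "nat \<Rightarrow> nat \<Rightarrow> (nat \<Rightarrow> nat \<Rightarrow> real) \<Rightarrow> bool" where
  "is_mat m n A \<longleftrightarrow> (\<forall>i j. (i \<ge> m \<or> j \<ge> n) \<longrightarrow> A i j = 0)"

definition stochastic :: "nat \<Rightarrow> nat \<Rightarrow> (nat \<Rightarrow> nat \<Rightarrow> real) \<Rightarrow> bool" where
  "stochastic m n A \<longleftrightarrow> is_mat m n A \<and>
     (\<forall>i<m. \<forall>j<n. A i j \<ge> 0) \<and> (\<forall>i<m. (\<Sum>j<n. A i j) = 1)"

text \<open>A^pi with (A^pi)_{i,j} = a_{m+1-i,n+1-j}; in 0-based indexing this is
  A (m-1-i) (n-1-j).\<close>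
definition mat_pi :: "nat \<Rightarrow> nat \<Rightarrow> (nat \<Rightarrow> nat \<Rightarrow> real) \<Rightarrow> (nat \<Rightarrow> nat \<Rightarrow> real)" where
  "mat_pi m n A = (\<lambda>i j. if i < m \<and> j < n then A (m - 1 - i) (n - 1 - j) else 0)"

definition centrosymmetric :: "nat \<Rightarrow> nat \<Rightarrow> (nat \<Rightarrow> nat \<Rightarrow> real) \<Rightarrow> bool" where
  "centrosymmetric m n A \<longleftrightarrow> is_mat m n A \<and> A = mat_pi m n A"

definition Gamma_pi :: "nat \<Rightarrow> nat \<Rightarrow> (nat \<Rightarrow> nat \<Rightarrow> real) set" where
  "Gamma_pi m n = {A. centrosymmetric m n A \<and> stochastic m n A}"

definition rect_perm_mat :: "nat \<Rightarrow> nat \<Rightarrow> (nat \<Rightarrow> nat \<Rightarrow> real) \<Rightarrow> bool" where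
  "rect_perm_mat m n A \<longleftrightarrow> is_mat m n A \<and>
     (\<forall>i<m. \<forall>j<n. A i j = 0 \<or> A i j = 1) \<and>
     (\<forall>i<m. \<exists>!j. j < n \<and> A i j = 1)"

text \<open>Extreme point of a set of matrices (mirrors the library's extreme_point_of,
  which needs a real_vector type; functions are not an instance): A belongs to S
  and A lies in no open segment between two distinct members of S.\<close>
definition mat_extreme_point_of :: "(nat \<Rightarrow> nat \<Rightarrow> real) \<Rightarrow> (nat \<Rightarrow> nat \<Rightarrow> real) set \<Rightarrow> bool" where
  "mat_extreme_point_of A S \<longleftrightarrow> A \<in> S \<and>
     \<not> (\<exists>B\<in>S. \<exists>C\<in>S. B \<noteq> C \<and> (\<exists>t::real. 0 < t \<and> t < 1 \<and>
          A = (\<lambda>i j. t * B i j + (1 - t) * C i j)))"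

end

theory Submission
  imports Defs
begin

text \<open>A centrosymmetric rectangular permutation matrix is extreme even among all stochastic
  matrices, since a 0-1 entry of a convex combination of entries in [0,1] forces the two
  entries to agree. Conversely, a stochastic matrix that is not a permutation matrix has a row
  i with two positive entries, so moving mass between them gives a direction E with zero row
  sums that can be added to and subtracted from A. Its centrosymmetrisation (E + E^pi)/2 keeps
  these properties and is nonzero because, for m even, the row m-1-i reflecting i is a
  different row, which E leaves untouched.\<close>

lemma stochastic_entry_le_one:
  assumes "stochastic m n A" "i < m" "j < n"
  shows "A i j \<le> 1"
proof -
  have "A i j \<le> (\<Sum>k<n. A i k)"
    using assms by (intro member_le_sum) (auto simp: stochastic_def)
  then show ?thesis
    using assms by (simp add: stochastic_def)
qed

lemma convex_comb_zero_one_eq: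
  fixes b c t :: real
  assumes "0 \<le> b" "b \<le> 1" "0 \<le> c" "c \<le> 1" "0 < t" "t < 1"
    and "t * b + (1 - t) * c \<in> {0, 1}"
  shows "b = c"
proof -
  have bounds: "0 \<le> t * b" "t * b \<le> t" "0 \<le> (1 - t) * c" "(1 - t) * c \<le> 1 - t"
    using assms by (simp_all add: mult_left_le)
  from assms(7) consider "t * b + (1 - t) * c = 0" | "t * b + (1 - t) * c = 1"
    by blast
  then show ?thesis
  proof cases
    case 1
    then have "t * b = 0" "(1 - t) * c = 0"
      using bounds by linarith+
    then show ?thesis
      using assms(5,6) by simp
  next
    case 2
    then have "t * b = t" "(1 - t) * c = 1 - t"
      using bounds by linarith+
    then show ?thesis
      using assms(5,6) by simp
  qed
qed

lemma rect_perm_mat_extreme_point_of: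
  assumes "A \<in> S" "S \<subseteq> {B. stochastic m n B}" "rect_perm_mat m n A"
  shows "mat_extreme_point_of A S"
  unfolding mat_extreme_point_of_def
proof (intro conjI notI)
  show "A \<in> S" by fact
  assume "\<exists>B\<in>S. \<exists>C\<in>S. B \<noteq> C \<and>
    (\<exists>t::real. 0 < t \<and> t < 1 \<and> A = (\<lambda>i j. t * B i j + (1 - t) * C i j))"
  then obtain B C t where B: "stochastic m n B" and C: "stochastic m n C" and "B \<noteq> C"
    and t: "0 < t" "t < 1" and A: "A = (\<lambda>i j. t * B i j + (1 - t) * C i j)"
    using assms(2) by blast
  have "B i j = C i j" for i j
  proof (cases "i < m \<and> j < n")
    case True
    have "A i j \<in> {0, 1}"
      using assms(3) True by (auto simp: rect_perm_mat_def)
    then show ?thesis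
      using B C True t stochastic_entry_le_one[OF B] stochastic_entry_le_one[OF C]
      by (intro convex_comb_zero_one_eq[of _ _ t]) (auto simp: A stochastic_def)
  next
    case False
    then show ?thesis
      using B C by (auto simp: stochastic_def is_mat_def)
  qed
  with \<open>B \<noteq> C\<close> show False by blast
qed

lemma stochastic_zero_one_imp_rect_perm_mat:
  assumes A: "stochastic m n A" and zero_one: "\<And>i j. i < m \<Longrightarrow> j < n \<Longrightarrow> A i j \<in> {0, 1}"
  shows "rect_perm_mat m n A"
  unfolding rect_perm_mat_def
proof (intro conjI allI impI)
  show "is_mat m n A"
    using A by (simp add: stochastic_def)
  show "A i j = 0 \<or> A i j = 1" if "i < m" "j < n" for i j
    using zero_one[OF that] by simp
  fix i assume i: "i < m"
  have row: "(\<Sum>j<n. A i j) = 1" and nonneg: "\<And>j. j < n \<Longrightarrow> 0 \<le> A i j"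
    using A i by (auto simp: stochastic_def)
  have "\<exists>j<n. A i j = 1"
  proof (rule ccontr)
    assume "\<not> ?thesis"
    then have "(\<Sum>j<n. A i j) = 0"
      using zero_one i by (intro sum.neutral) auto
    with row show False by simp
  qed
  moreover have "j = j'" if "j < n" "A i j = 1" "j' < n" "A i j' = 1" for j j'
  proof (rule ccontr)
    assume "j \<noteq> j'"
    then have "(\<Sum>k\<in>{j, j'}. A i k) = 2"
      using that by simp
    moreover have "(\<Sum>k\<in>{j, j'}. A i k) \<le> (\<Sum>k<n. A i k)"
      using that nonneg by (intro sum_mono2) auto
    ultimately show False
      using row by simp
  qed
  ultimately show "\<exists>!j. j < n \<and> A i j = 1"
    by blast
qed

lemma stochastic_not_rect_perm_mat_imp_fractional_entry:
  assumes "stochastic m n A" "\<not> rect_perm_mat m n A"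
  obtains i j where "i < m" "j < n" "0 < A i j" "A i j < 1"
proof -
  have "\<exists>i<m. \<exists>j<n. 0 < A i j \<and> A i j < 1"
  proof (rule ccontr)
    assume "\<not> ?thesis"
    then have "A i j \<in> {0, 1}" if "i < m" "j < n" for i j
      using that assms(1) stochastic_entry_le_one[OF assms(1)]
      by (force simp: stochastic_def)
    then show False
      using assms stochastic_zero_one_imp_rect_perm_mat by blast
  qed
  then show ?thesis
    using that by blast
qed

lemma stochastic_row_other_positive_entry:
  assumes A: "stochastic m n A" and "i < m" "j < n" "A i j < 1"
  obtains j' where "j' < n" "j' \<noteq> j" "0 < A i j'"
proof -
  have "\<exists>j'<n. j' \<noteq> j \<and> 0 < A i j'"
  proof (rule ccontr)
    assume "\<not> ?thesis"
    then have "\<forall>j'\<in>{..<n} - {j}. A i j' = 0"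
      using A \<open>i < m\<close> by (force simp: stochastic_def)
    then have "(\<Sum>j'<n. A i j') = A i j"
      using \<open>j < n\<close> by (simp add: sum.remove)
    then show False
      using A assms(2,4) by (simp add: stochastic_def)
  qed
  then show ?thesis
    using that by blast
qed

lemma centrosymmetricI:
  assumes "is_mat m n A" "\<And>i j. i < m \<Longrightarrow> j < n \<Longrightarrow> A i j = A (m - 1 - i) (n - 1 - j)"
  shows "centrosymmetric m n A"
  unfolding centrosymmetric_def
proof (intro conjI ext)
  show "is_mat m n A" by fact
  show "A i j = mat_pi m n A i j" for i j
  proof (cases "i < m \<and> j < n")
    case True
    then show ?thesis
      using assms(2)[of i j] by (simp add: mat_pi_def)
  next
    case False
    then show ?thesis
      using assms(1) by (auto simp: mat_pi_def is_mat_def)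
  qed
qed

lemma centrosymmetric_entry:
  assumes "centrosymmetric m n A" "i < m" "j < n"
  shows "A i j = A (m - 1 - i) (n - 1 - j)"
proof -
  have "A i j = mat_pi m n A i j"
    using assms(1) by (metis centrosymmetric_def)
  then show ?thesis
    using assms(2,3) by (simp add: mat_pi_def)
qed

lemma mat_pi_row_sum:
  assumes "i < m"
  shows "(\<Sum>j<n. mat_pi m n E i j) = (\<Sum>j<n. E (m - 1 - i) j)"
proof -
  have "(\<Sum>j<n. mat_pi m n E i j) = (\<Sum>j<n. E (m - 1 - i) (n - Suc j))"
    using assms by (intro sum.cong) (auto simp: mat_pi_def)
  also have "\<dots> = (\<Sum>j<n. E (m - 1 - i) j)"
    by (rule sum.nat_diff_reindex)
  finally show ?thesis .
qed

lemma mat_pi_abs_le: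
  assumes "centrosymmetric m n A" "\<And>i j. i < m \<Longrightarrow> j < n \<Longrightarrow> \<bar>E i j\<bar> \<le> A i j"
    and "i < m" "j < n"
  shows "\<bar>mat_pi m n E i j\<bar> \<le> A i j"
  using assms(2)[of "m - 1 - i" "n - 1 - j"] assms(3,4) centrosymmetric_entry[OF assms(1,3,4)]
  by (simp add: mat_pi_def)

lemma centrosymmetric_average_mat_pi:
  assumes "is_mat m n E"
  shows "centrosymmetric m n (\<lambda>i j. (E i j + mat_pi m n E i j) / 2)"
proof (rule centrosymmetricI)
  show "is_mat m n (\<lambda>i j. (E i j + mat_pi m n E i j) / 2)"
    using assms by (simp add: is_mat_def mat_pi_def)
  fix i j assume "i < m" "j < n"
  then show "(E i j + mat_pi m n E i j) / 2
      = (E (m - 1 - i) (n - 1 - j) + mat_pi m n E (m - 1 - i) (n - 1 - j)) / 2"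
    by (simp add: mat_pi_def)
qed

lemma Gamma_pi_add_scaled:
  assumes A: "A \<in> Gamma_pi m n" and D: "centrosymmetric m n D"
    and rows: "\<And>i. i < m \<Longrightarrow> (\<Sum>j<n. D i j) = 0"
    and bound: "\<And>i j. i < m \<Longrightarrow> j < n \<Longrightarrow> \<bar>D i j\<bar> \<le> A i j"
    and s: "\<bar>s\<bar> \<le> 1"
  shows "(\<lambda>i j. A i j + s * D i j) \<in> Gamma_pi m n"
proof -
  have A': "centrosymmetric m n A" "stochastic m n A"
    using A by (auto simp: Gamma_pi_def)
  have "centrosymmetric m n (\<lambda>i j. A i j + s * D i j)"
  proof (rule centrosymmetricI)
    show "is_mat m n (\<lambda>i j. A i j + s * D i j)"
      using A'(1) D by (simp add: centrosymmetric_def is_mat_def)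
    fix i j assume "i < m" "j < n"
    then show "A i j + s * D i j = A (m - 1 - i) (n - 1 - j) + s * D (m - 1 - i) (n - 1 - j)"
      using centrosymmetric_entry[OF A'(1), of i j] centrosymmetric_entry[OF D, of i j] by simp
  qed
  moreover have "0 \<le> A i j + s * D i j" if "i < m" "j < n" for i j
  proof -
    have "\<bar>s * D i j\<bar> \<le> \<bar>D i j\<bar>"
      using s by (simp add: abs_mult mult_left_le_one_le)
    then show ?thesis
      using bound[OF that] by linarith
  qed
  moreover have "(\<Sum>j<n. A i j + s * D i j) = 1" if "i < m" for i
    using A'(2) rows[OF that] that
    by (simp add: stochastic_def sum.distrib sum_distrib_left[symmetric])
  ultimately show ?thesis
    by (simp add: Gamma_pi_def stochastic_def centrosymmetric_def)
qed

lemma midpoint_not_mat_extreme_point_of: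
  assumes "B \<in> S" "C \<in> S" "B \<noteq> C" "A = (\<lambda>i j. (B i j + C i j) / 2)"
  shows "\<not> mat_extreme_point_of A S"
proof -
  have "A = (\<lambda>i j. (1 / 2) * B i j + (1 - 1 / 2) * C i j)"
    using assms(4) by (simp add: field_simps)
  moreover have "0 < (1 / 2 :: real)" "(1 / 2 :: real) < 1"
    by simp_all
  ultimately show ?thesis
    using assms(1-3) unfolding mat_extreme_point_of_def by blast
qed

lemma not_mat_extreme_point_of_Gamma_pi:
  assumes A: "A \<in> Gamma_pi m n" and E: "is_mat m n E"
    and rows: "\<And>i. i < m \<Longrightarrow> (\<Sum>j<n. E i j) = 0"
    and bound: "\<And>i j. i < m \<Longrightarrow> j < n \<Longrightarrow> \<bar>E i j\<bar> \<le> A i j"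
    and nonzero: "E i j + mat_pi m n E i j \<noteq> 0"
  shows "\<not> mat_extreme_point_of A (Gamma_pi m n)"
proof -
  define D where "D i j = (E i j + mat_pi m n E i j) / 2" for i j
  have D: "centrosymmetric m n D"
    unfolding D_def using centrosymmetric_average_mat_pi[OF E] .
  have "(\<Sum>j<n. D i j) = 0" if "i < m" for i
    using rows[OF that] rows[of "m - 1 - i"] that mat_pi_row_sum[OF that, of n E]
    by (simp add: D_def sum.distrib sum_divide_distrib[symmetric])
  moreover have "\<bar>D i j\<bar> \<le> A i j" if "i < m" "j < n" for i j
  proof -
    have "\<bar>mat_pi m n E i j\<bar> \<le> A i j"
      using A bound that by (intro mat_pi_abs_le) (auto simp: Gamma_pi_def)
    then show ?thesis
      using bound[OF that] abs_triangle_ineq[of "E i j" "mat_pi m n E i j"] by (simp add: D_def)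
  qed
  ultimately have "(\<lambda>i j. A i j + s * D i j) \<in> Gamma_pi m n" if "\<bar>s\<bar> \<le> 1" for s
    using Gamma_pi_add_scaled[OF A D _ _ that] by blast
  from this[of 1] this[of "-1"]
  have plus: "(\<lambda>i j. A i j + D i j) \<in> Gamma_pi m n"
    and minus: "(\<lambda>i j. A i j - D i j) \<in> Gamma_pi m n"
    by simp_all
  have "(\<lambda>i j. A i j + D i j) \<noteq> (\<lambda>i j. A i j - D i j)"
  proof
    assume "(\<lambda>i j. A i j + D i j) = (\<lambda>i j. A i j - D i j)"
    then have "A i j + D i j = A i j - D i j"
      by meson
    with nonzero show False
      by (simp add: D_def)
  qed
  from midpoint_not_mat_extreme_point_of[OF plus minus this]
  show ?thesis
    by (simp add: fun_eq_iff)
qed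

lemma mat_extreme_point_of_Gamma_pi_imp_rect_perm_mat:
  assumes "even m" "A \<in> Gamma_pi m n" "mat_extreme_point_of A (Gamma_pi m n)"
  shows "rect_perm_mat m n A"
proof (rule ccontr)
  assume "\<not> rect_perm_mat m n A"
  moreover have A: "stochastic m n A"
    using assms(2) by (simp add: Gamma_pi_def)
  ultimately obtain i j where ij: "i < m" "j < n" "0 < A i j" "A i j < 1"
    using stochastic_not_rect_perm_mat_imp_fractional_entry by blast
  then obtain j' where j': "j' < n" "j' \<noteq> j" "0 < A i j'"
    using stochastic_row_other_positive_entry[OF A] by blast
  define \<epsilon> where "\<epsilon> = min (A i j) (A i j')"
  define E where
    "E k l = (if k = i \<and> l = j then \<epsilon> else 0) - (if k = i \<and> l = j' then \<epsilon> else 0)" for k l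
  have "m - 1 - i \<noteq> i"
    using \<open>even m\<close> \<open>i < m\<close> by presburger
  then have nonzero: "E i j + mat_pi m n E i j \<noteq> 0"
    using ij j' by (simp add: E_def mat_pi_def \<epsilon>_def)
  have "is_mat m n E"
    using ij j' by (auto simp: is_mat_def E_def)
  moreover have "(\<Sum>l<n. E k l) = 0" for k
    using ij j' by (cases "k = i") (simp_all add: E_def sum_subtractf)
  moreover have "\<bar>E k l\<bar> \<le> A k l" if "k < m" "l < n" for k l
    using A that ij(3) j'(3) \<epsilon>_def by (auto simp: E_def stochastic_def)
  ultimately have "\<not> mat_extreme_point_of A (Gamma_pi m n)"
    using not_mat_extreme_point_of_Gamma_pi[OF assms(2) _ _ _ nonzero] by blast
  with assms(3) show False
    by contradiction
qed

theorem mainTheorem3: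
  fixes m n :: nat and A :: "nat \<Rightarrow> nat \<Rightarrow> real"
  assumes "m > 0" and "n > 0" and "even m"
    and "A \<in> Gamma_pi m n"
  shows "mat_extreme_point_of A (Gamma_pi m n) \<longleftrightarrow>
           (centrosymmetric m n A \<and> rect_perm_mat m n A)"
proof
  assume "mat_extreme_point_of A (Gamma_pi m n)"
  then show "centrosymmetric m n A \<and> rect_perm_mat m n A"
    using assms mat_extreme_point_of_Gamma_pi_imp_rect_perm_mat by (auto simp: Gamma_pi_def)
next
  assume "centrosymmetric m n A \<and> rect_perm_mat m n A"
  then show "mat_extreme_point_of A (Gamma_pi m n)"
    using assms(4) by (intro rect_perm_mat_extreme_point_of) (auto simp: Gamma_pi_def)
qed

end
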